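(* Let $R$ be a commutative ring with ${\rm char}(R)=3$, $G$ a group with involution $\varphi$, and assume $(RG)^-_\varphi$ is commutative. Let $g,h\in G\setminus G_\varphi$ be non-commuting elements satisfying one of the following conditions: (C3) $gh\in G_\varphi$, $hg=\varphi(g)h=g\varphi(h)$; (C4) $gh=h\varphi(g)=\varphi(g)\varphi(h)$ and $\varphi(h)g=\varphi(g)h$; (C5) $gh=\varphi(h)g=\varphi(g)\varphi(h)$ and $h\varphi(g)=g\varphi(h)$; (C6) $hg\in G_\varphi$, $gh=\varphi(h)g=h\varphi(g)$. Then $\langle g^{-1}\varphi(g)\rangle=\langle h^{-1}\varphi(h)\rangle=\langle (g,h)\rangle$ and $(g,h)^3=1$.
   Context: An involution on a group $G$ is a map $\varphi:G\to G$ with $\varphi(gh)=\varphi(h)\varphi(g)$ and $\varphi^2=\mathrm{id}$, extended $R$-linearly to $RG$. $G_\varphi=\{g\in G\mid\varphi(g)=g\}$; $(RG)^-_\varphi=\{\alpha\in RG\mid\varphi(\alpha)=-\alpha\}$. The group commutator is $(g,h)=ghg^{-1}h^{-1}$. *)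

theory Defs
  imports "HOL-Algebra.Algebra"
begin

definition is_involution :: "('a, 'b) monoid_scheme \<Rightarrow> ('a \<Rightarrow> 'a) \<Rightarrow> bool" where
  "is_involution G \<phi> \<longleftrightarrow>
     (\<forall>x\<in>carrier G. \<phi> x \<in> carrier G) \<and>
     (\<forall>x\<in>carrier G. \<forall>y\<in>carrier G. \<phi> (x \<otimes>\<^bsub>G\<^esub> y) = \<phi> y \<otimes>\<^bsub>G\<^esub> \<phi> x) \<and>
     (\<forall>x\<in>carrier G. \<phi> (\<phi> x) = x)"

definition group_ring :: "('a, 'b) monoid_scheme \<Rightarrow> ('a \<Rightarrow> 'r::comm_ring_1) set" where
  "group_ring G = {\<alpha>. finite {x. \<alpha> x \<noteq> 0} \<and> {x. \<alpha> x \<noteq> 0} \<subseteq> carrier G}"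

definition gr_mult :: "('a, 'b) monoid_scheme \<Rightarrow> ('a \<Rightarrow> 'r::comm_ring_1) \<Rightarrow> ('a \<Rightarrow> 'r) \<Rightarrow> ('a \<Rightarrow> 'r)" where
  "gr_mult G \<alpha> \<beta> = (\<lambda>x. if x \<in> carrier G
       then (\<Sum>y\<in>{y. \<alpha> y \<noteq> 0}. \<alpha> y * \<beta> (inv\<^bsub>G\<^esub> y \<otimes>\<^bsub>G\<^esub> x)) else 0)"

text \<open>R-linear extension of \<phi> to RG: \<phi>(\<Sum> a_g g) = \<Sum> a_g \<phi>(g), so the coefficient of x is a_{\<phi>(x)}.\<close>
definition gr_inv_ext :: "('a, 'b) monoid_scheme \<Rightarrow> ('a \<Rightarrow> 'a) \<Rightarrow> ('a \<Rightarrow> 'r::comm_ring_1) \<Rightarrow> ('a \<Rightarrow> 'r)" where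
  "gr_inv_ext G \<phi> \<alpha> = (\<lambda>x. if x \<in> carrier G then \<alpha> (\<phi> x) else 0)"

definition skew_elems :: "('a, 'b) monoid_scheme \<Rightarrow> ('a \<Rightarrow> 'a) \<Rightarrow> ('a \<Rightarrow> 'r::comm_ring_1) set" where
  "skew_elems G \<phi> = {\<alpha> \<in> group_ring G. gr_inv_ext G \<phi> \<alpha> = - \<alpha>}"

definition gcomm :: "('a, 'b) monoid_scheme \<Rightarrow> 'a \<Rightarrow> 'a \<Rightarrow> 'a" where
  "gcomm G g h = g \<otimes>\<^bsub>G\<^esub> h \<otimes>\<^bsub>G\<^esub> inv\<^bsub>G\<^esub> g \<otimes>\<^bsub>G\<^esub> inv\<^bsub>G\<^esub> h"

end

theory Submission
  imports Defs "HOL-Library.Multiset"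
begin

(* Lemma 3.7.  Write a = phi(g), b = phi(h).  The elements g - a and h - b of RG are
   skew, so they commute.  Comparing coefficients of  (g - a)(h - b) = (h - b)(g - a)  says that the multisets
   {gh, ab, ha, bg} and {gb, ah, hg, ba} contain every group element equally often modulo 3.
   Under each of (C3)-(C6) this forces two further relations between the products.
   The resulting systems of relations are then solved in the group: with u = g^-1 a, the element
   u is central in <g, h>, u^3 = 1, h^-1 b = u^(+-1) and (g,h) = u^(+-1).
   Only (C3) and (C4) are solved directly: (C6) is (C3) with g and h exchanged, and (C5)
   is (C4) applied to (phi g, phi h). *)

section \<open>Point differences in the group ring\<close>

definition point_diff :: "'a \<Rightarrow> 'a \<Rightarrow> 'a \<Rightarrow> 'r::comm_ring_1" where
  "point_diff a b = (\<lambda>z. (if z = a then 1 else 0) - (if z = b then 1 else 0))"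

lemma point_diff_support:
  "a \<noteq> b \<Longrightarrow> {z. (point_diff a b z :: 'r::comm_ring_1) \<noteq> 0} = {a, b}"
  by (auto simp: point_diff_def)

lemma (in group) gr_mult_point_diff_left:
  assumes "a \<in> carrier G" "b \<in> carrier G" "a \<noteq> b" "z \<in> carrier G"
  shows "gr_mult G (point_diff a b) \<beta> z = \<beta> (inv a \<otimes> z) - (\<beta> (inv b \<otimes> z) :: 'r::comm_ring_1)"
  using assms by (simp add: gr_mult_def point_diff_support) (simp add: point_diff_def)

lemma (in group) gr_mult_point_diff:
  assumes carrier: "a \<in> carrier G" "b \<in> carrier G" "c \<in> carrier G" "d \<in> carrier G"
    and "a \<noteq> b" and z: "z \<in> carrier G"
  shows "gr_mult G (point_diff a b) (point_diff c d) z
      = of_nat (count {#a \<otimes> c, b \<otimes> d#} z) - (of_nat (count {#a \<otimes> d, b \<otimes> c#} z) :: 'r::comm_ring_1)"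
proof -
  have solve: "(inv x \<otimes> z = y) = (z = x \<otimes> y)" if "x \<in> carrier G" "y \<in> carrier G" for x y
    using that z by (metis inv_solve_left)
  show ?thesis
    using gr_mult_point_diff_left[OF carrier(1,2) assms(5) z, of "point_diff c d"] carrier
    by (auto simp: point_diff_def solve)
qed

lemma (in group) point_diff_skew:
  assumes inv: "is_involution G \<phi>" and g: "g \<in> carrier G" and "\<phi> g \<noteq> g"
  shows "(point_diff g (\<phi> g) :: 'a \<Rightarrow> 'r::comm_ring_1) \<in> skew_elems G \<phi>"
proof -
  have \<phi>g: "\<phi> g \<in> carrier G" "\<phi> (\<phi> g) = g" using inv g unfolding is_involution_def by auto
  have "gr_inv_ext G \<phi> (point_diff g (\<phi> g)) x = - (point_diff g (\<phi> g) x :: 'r)" for x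
  proof (cases "x \<in> carrier G")
    case True
    then have "\<phi> (\<phi> x) = x" using inv unfolding is_involution_def by auto
    then have "(\<phi> x = g) = (x = \<phi> g)" "(\<phi> x = \<phi> g) = (x = g)" using \<phi>g by metis+
    then show ?thesis using True by (simp add: gr_inv_ext_def point_diff_def)
  next
    case False
    then show ?thesis using g \<phi>g by (auto simp: gr_inv_ext_def point_diff_def)
  qed
  then show ?thesis using assms \<phi>g
    by (auto simp: skew_elems_def group_ring_def point_diff_support)
qed

lemma of_nat_eq_imp_mod_CHAR:
  assumes "of_nat m = (of_nat n :: 'a::comm_ring_1)"
  shows "m mod CHAR('a) = n mod CHAR('a)"
proof -
  have "of_int (int m - int n) = (0 :: 'a)" using assms by simp
  then have "int CHAR('a) dvd int m - int n" by (simp only: of_int_eq_0_iff_char_dvd)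
  then have "int m mod int CHAR('a) = int n mod int CHAR('a)" by (simp add: mod_eq_dvd_iff)
  then show ?thesis by (simp flip: of_nat_mod)
qed

lemma (in group) commuting_differences_counts:
  assumes carrier: "x \<in> carrier G" "y \<in> carrier G" "a \<in> carrier G" "b \<in> carrier G"
    and "x \<noteq> a" "y \<noteq> b"
    and comm: "gr_mult G (point_diff x a) (point_diff y b)
             = (gr_mult G (point_diff y b) (point_diff x a) :: 'a \<Rightarrow> 'r::comm_ring_1)"
    and z: "z \<in> carrier G"
  shows "count {#x \<otimes> y, a \<otimes> b, y \<otimes> a, b \<otimes> x#} z mod CHAR('r)
       = count {#x \<otimes> b, a \<otimes> y, y \<otimes> x, b \<otimes> a#} z mod CHAR('r)"
proof -
  have "(of_nat (count {#x \<otimes> y, a \<otimes> b#} z) - of_nat (count {#x \<otimes> b, a \<otimes> y#} z) :: 'r)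
      = of_nat (count {#y \<otimes> x, b \<otimes> a#} z) - of_nat (count {#y \<otimes> a, b \<otimes> x#} z)"
    using fun_cong[OF comm, of z] assms
      gr_mult_point_diff[OF carrier(1,3,2,4) _ z, where 'r = 'r]
      gr_mult_point_diff[OF carrier(2,4,1,3) _ z, where 'r = 'r]
    by (simp del: count_add_mset)
  then have "(of_nat (count {#x \<otimes> y, a \<otimes> b#} z + count {#y \<otimes> a, b \<otimes> x#} z) :: 'r)
      = of_nat (count {#x \<otimes> b, a \<otimes> y#} z + count {#y \<otimes> x, b \<otimes> a#} z)"
    by (simp add: algebra_simps)
  moreover have "count {#p, q, r, s#} z = count {#p, q#} z + count {#r, s#} z" for p q r s :: 'a
    by simp
  ultimately show ?thesis by (metis of_nat_eq_imp_mod_CHAR)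
qed

section \<open>Commutators and elements linked by a cube root of unity\<close>

lemma (in group) gcomm_eq:
  "x \<in> carrier G \<Longrightarrow> y \<in> carrier G \<Longrightarrow> gcomm G x y = x \<otimes> y \<otimes> inv (y \<otimes> x)"
  by (simp add: gcomm_def m_assoc inv_mult_group)

lemma (in group) gcomm_swap:
  assumes "x \<in> carrier G" "y \<in> carrier G"
  shows "gcomm G y x = inv (gcomm G x y)"
  using assms by (simp add: gcomm_eq inv_mult_group)

lemma (in group) commutes_inv:
  assumes "k \<in> carrier G" "z \<in> carrier G" "k \<otimes> z = z \<otimes> k"
  shows "k \<otimes> inv z = inv z \<otimes> k"
  by (metis assms inv_closed inv_solve_left inv_solve_right m_assoc m_closed)

lemma (in group) central_commutator:
  assumes carrier: "x \<in> carrier G" "y \<in> carrier G" "k \<in> carrier G"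
    and kx: "k \<otimes> x = x \<otimes> k" and ky: "k \<otimes> y = y \<otimes> k"
    and xy: "x \<otimes> y = y \<otimes> x \<otimes> k"
  shows "gcomm G x y = k"
proof -
  have "k \<otimes> (y \<otimes> x) = y \<otimes> x \<otimes> k" using carrier kx ky by (metis m_assoc)
  then have "k \<otimes> inv (y \<otimes> x) = inv (y \<otimes> x) \<otimes> k"
    using carrier by (intro commutes_inv) (auto simp: m_assoc)
  moreover have "gcomm G x y = (y \<otimes> x) \<otimes> (k \<otimes> inv (y \<otimes> x))"
    using carrier by (simp add: gcomm_eq xy m_assoc)
  ultimately show ?thesis using carrier by (simp add: m_assoc[symmetric])
qed

lemma (in group) generate_inv_eq:
  assumes "k \<in> carrier G" shows "generate G {inv k} = generate G {k}"
proof -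
  have "generate G {inv z} \<subseteq> generate G {z}" if "z \<in> carrier G" for z
    using that generate.incl[of z "{z}" G] generate_m_inv_closed[of "{z}" z]
    by (intro generate_subgroup_incl generate_is_subgroup) auto
  from this[of k] this[of "inv k"] assms show ?thesis by auto
qed

lemma (in group) inv_in_pair: "k \<in> carrier G \<Longrightarrow> z \<in> {k, inv k} \<Longrightarrow> inv z \<in> {k, inv k}"
  by auto

lemma (in group) nat_pow_3: "k \<in> carrier G \<Longrightarrow> k [^] (3::nat) = k \<otimes> k \<otimes> k"
  by (simp add: numeral_3_eq_3 m_assoc)

definition (in group) cube_linked :: "'a \<Rightarrow> 'a \<Rightarrow> 'a \<Rightarrow> 'a \<Rightarrow> bool" where
  "cube_linked x y a b \<longleftrightarrow> (\<exists>k\<in>carrier G. k [^] (3::nat) = \<one> \<and>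
     inv x \<otimes> a \<in> {k, inv k} \<and> inv y \<otimes> b \<in> {k, inv k} \<and> gcomm G x y \<in> {k, inv k})"

lemma (in group) cube_linkedI:
  assumes "k \<in> carrier G" "k [^] (3::nat) = \<one>"
    and "inv x \<otimes> a \<in> {k, inv k}" "inv y \<otimes> b \<in> {k, inv k}" "gcomm G x y \<in> {k, inv k}"
  shows "cube_linked x y a b"
  unfolding cube_linked_def using assms by blast

lemma (in group) cube_linked_generate:
  assumes "cube_linked x y a b"
  shows "generate G {inv x \<otimes> a} = generate G {inv y \<otimes> b} \<and>
         generate G {inv y \<otimes> b} = generate G {gcomm G x y} \<and>
         gcomm G x y [^] (3::nat) = \<one>"
proof -
  obtain k where k: "k \<in> carrier G" "k [^] (3::nat) = \<one>"
    and links: "inv x \<otimes> a \<in> {k, inv k}" "inv y \<otimes> b \<in> {k, inv k}" "gcomm G x y \<in> {k, inv k}"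
    using assms unfolding cube_linked_def by blast
  have "generate G {z} = generate G {k} \<and> z [^] (3::nat) = \<one>" if "z \<in> {k, inv k}" for z
  proof -
    have "generate G {inv k} = generate G {k}" using k(1) by (rule generate_inv_eq)
    moreover have "inv k [^] (3::nat) = \<one>" using k by (simp add: nat_pow_inv)
    ultimately show ?thesis using that k by blast
  qed
  then show ?thesis using links by metis
qed

text \<open>Exchanging the roles of (x, a) and (y, b) preserves cube_linked, as (y,x) = (x,y)\<inverse>.\<close>
lemma (in group) cube_linked_swap:
  assumes "x \<in> carrier G" "y \<in> carrier G" "cube_linked y x b a"
  shows "cube_linked x y a b"
proof -
  obtain k where k: "k \<in> carrier G" "k [^] (3::nat) = \<one>"
    and links: "inv y \<otimes> b \<in> {k, inv k}" "inv x \<otimes> a \<in> {k, inv k}" "gcomm G y x \<in> {k, inv k}"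
    using assms(3) unfolding cube_linked_def by blast
  have "gcomm G x y = inv (gcomm G y x)" using assms(2,1) by (rule gcomm_swap)
  then have "gcomm G x y \<in> {k, inv k}" using inv_in_pair[OF k(1) links(3)] by simp
  then show ?thesis using k links by (intro cube_linkedI)
qed

text \<open>Exchanging x with a and y with b preserves cube_linked when xy = ab and yx = ba,
  because then (a,b) = (x,y) and a\<inverse>x = (x\<inverse>a)\<inverse>.\<close>
lemma (in group) cube_linked_mirror:
  assumes carrier: "x \<in> carrier G" "y \<in> carrier G" "a \<in> carrier G" "b \<in> carrier G"
    and "cube_linked a b x y" "x \<otimes> y = a \<otimes> b" "y \<otimes> x = b \<otimes> a"
  shows "cube_linked x y a b"
proof -
  obtain k where k: "k \<in> carrier G" "k [^] (3::nat) = \<one>"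
    and links: "inv a \<otimes> x \<in> {k, inv k}" "inv b \<otimes> y \<in> {k, inv k}" "gcomm G a b \<in> {k, inv k}"
    using assms(5) unfolding cube_linked_def by blast
  have "inv (inv a \<otimes> x) = inv x \<otimes> a" "inv (inv b \<otimes> y) = inv y \<otimes> b"
    using carrier by (simp_all add: inv_mult_group)
  then have "inv x \<otimes> a \<in> {k, inv k}" "inv y \<otimes> b \<in> {k, inv k}"
    using inv_in_pair[OF k(1) links(1)] inv_in_pair[OF k(1) links(2)] by simp_all
  moreover have "gcomm G x y \<in> {k, inv k}" using assms links(3) by (simp add: gcomm_eq)
  ultimately show ?thesis using k by (intro cube_linkedI)
qed

section \<open>Solving the two systems of relations\<close>

text \<open>Relations of case (C4) together with yx = ba = xb.  Here u = x\<inverse>a is central,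
  y\<inverse>b = u\<inverse> = u^2 and (x,y) = u.\<close>
lemma (in group) cube_linked_C4:
  assumes carrier: "x \<in> carrier G" "y \<in> carrier G" "a \<in> carrier G" "b \<in> carrier G"
    and xy: "x \<otimes> y = y \<otimes> a" and ya: "y \<otimes> a = a \<otimes> b" and bx: "b \<otimes> x = a \<otimes> y"
    and yx: "y \<otimes> x = b \<otimes> a" and ba: "b \<otimes> a = x \<otimes> b"
  shows "cube_linked x y a b"
proof -
  define u v where "u = inv x \<otimes> a" and "v = inv y \<otimes> b"
  have uv: "u \<in> carrier G" "v \<in> carrier G" using carrier by (simp_all add: u_def v_def)
  have a: "a = x \<otimes> u" and b: "b = y \<otimes> v"
    using carrier by (simp_all add: u_def v_def m_assoc[symmetric])
  note c = carrier uv
  have xy_u: "x \<otimes> y = y \<otimes> x \<otimes> u" using xy c by (simp add: a m_assoc)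
  have yx_v: "y \<otimes> x = x \<otimes> y \<otimes> v" using yx ba c by (simp add: b m_assoc)
  have vu: "v \<otimes> u = \<one>"
  proof -
    have "x \<otimes> y = x \<otimes> y \<otimes> (v \<otimes> u)" using xy_u yx_v c by (simp add: m_assoc)
    then show ?thesis using c by simp
  qed
  then have uv_one: "u \<otimes> v = \<one>" using c inv_comm by blast
  have ux: "u \<otimes> x = x \<otimes> u"
  proof -
    have x_eq: "v \<otimes> x \<otimes> u = x" using yx c by (simp add: a b m_assoc)
    have "u \<otimes> x = u \<otimes> (v \<otimes> x \<otimes> u)" using x_eq by simp
    also have "\<dots> = (u \<otimes> v) \<otimes> x \<otimes> u" using c by (simp add: m_assoc)
    finally show ?thesis using uv_one c by simp
  qed
  have uy: "u \<otimes> y = y \<otimes> u"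
  proof -
    have y_eq: "u \<otimes> y \<otimes> v = y" using xy ya c by (simp add: a b m_assoc)
    have "y \<otimes> u = (u \<otimes> y \<otimes> v) \<otimes> u" using y_eq by simp
    also have "\<dots> = u \<otimes> y \<otimes> (v \<otimes> u)" using c by (simp add: m_assoc)
    finally show ?thesis using vu c by simp
  qed
  have v_sq: "v = u \<otimes> u"
  proof -
    have vx: "v \<otimes> x = x \<otimes> v" using ux c vu by (metis inv_equality commutes_inv)
    have "y \<otimes> x \<otimes> v = y \<otimes> v \<otimes> x" using vx c by (simp add: m_assoc)
    also have "\<dots> = x \<otimes> u \<otimes> y" using bx by (simp add: a b)
    also have "\<dots> = x \<otimes> y \<otimes> u" using uy c by (simp add: m_assoc)
    also have "\<dots> = y \<otimes> x \<otimes> (u \<otimes> u)" using xy_u c by (simp add: m_assoc)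
    finally show ?thesis using c by simp
  qed
  have "u [^] (3::nat) = \<one>" using vu v_sq c by (simp add: nat_pow_3 m_assoc)
  moreover have "gcomm G x y = u" using central_commutator[OF c(1,2) uv(1) ux uy xy_u] .
  moreover have "v = inv u" using vu c by (simp add: inv_equality)
  ultimately show ?thesis using uv by (intro cube_linkedI[of u]) (simp_all add: u_def v_def)
qed

text \<open>Relations of case (C3) together with ab = ya = bx.  Here u = x\<inverse>a = y\<inverse>b is central
  and (x,y) = u\<inverse>.\<close>
lemma (in group) cube_linked_C3:
  assumes carrier: "x \<in> carrier G" "y \<in> carrier G" "a \<in> carrier G" "b \<in> carrier G"
    and ba: "b \<otimes> a = x \<otimes> y" and yx: "y \<otimes> x = a \<otimes> y" and ay: "a \<otimes> y = x \<otimes> b"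
    and ab: "a \<otimes> b = y \<otimes> a" and ya: "y \<otimes> a = b \<otimes> x"
  shows "cube_linked x y a b"
proof -
  define u v where "u = inv x \<otimes> a" and "v = inv y \<otimes> b"
  have uv: "u \<in> carrier G" "v \<in> carrier G" using carrier by (simp_all add: u_def v_def)
  have a: "a = x \<otimes> u" and b: "b = y \<otimes> v"
    using carrier by (simp_all add: u_def v_def m_assoc[symmetric])
  note c = carrier uv
  have yx_u: "y \<otimes> x = x \<otimes> u \<otimes> y" using yx by (simp add: a)
  have v_u: "v = u"
  proof -
    have "x \<otimes> u \<otimes> y \<otimes> v = y \<otimes> x \<otimes> u" using ab c by (simp add: a b m_assoc)
    also have "\<dots> = x \<otimes> u \<otimes> y \<otimes> u" using yx_u by simp
    finally show ?thesis using c by simp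
  qed
  have ux: "u \<otimes> x = x \<otimes> u" using ya c by (simp add: a b v_u m_assoc)
  have uy: "u \<otimes> y = y \<otimes> u" using ay c by (simp add: a b v_u m_assoc)
  have yx_xy: "y \<otimes> x = x \<otimes> y \<otimes> u" using yx_u uy c by (simp add: m_assoc)
  have "x \<otimes> y \<otimes> (u \<otimes> u \<otimes> u) = x \<otimes> y"
  proof -
    have "x \<otimes> y \<otimes> (u \<otimes> u \<otimes> u) = y \<otimes> x \<otimes> u \<otimes> u" using yx_xy c by (simp add: m_assoc)
    also have "\<dots> = y \<otimes> u \<otimes> (x \<otimes> u)" using ux c by (metis m_assoc m_closed)
    also have "\<dots> = x \<otimes> y" using ba by (simp add: a b v_u)
    finally show ?thesis .
  qed
  then have "u [^] (3::nat) = \<one>" using c by (simp add: nat_pow_3)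
  moreover have "gcomm G x y = inv u"
    using central_commutator[OF c(2,1) uv(1) uy ux yx_xy] gcomm_swap[OF c(2,1)] by simp
  ultimately show ?thesis
    using uv by (intro cube_linkedI[of u]) (simp_all add: u_def v_def[symmetric] v_u)
qed

text \<open>In each case, after cancelling the terms common to both sides,
  the count at a suitable product is 1 plus two indicators on one side and 0 on the other;
  divisibility by 3 forces both indicators to be 1, i.e. two further relations.\<close>
lemma (in group) cube_linked_of_conditions:
  assumes carrier: "x \<in> carrier G" "y \<in> carrier G" "a \<in> carrier G" "b \<in> carrier G"
    and distinct: "a \<noteq> x" "b \<noteq> y" "x \<otimes> y \<noteq> y \<otimes> x"
    and counts: "\<And>z. z \<in> carrier G \<Longrightarrow> count {#x \<otimes> y, a \<otimes> b, y \<otimes> a, b \<otimes> x#} z mod 3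
                                        = count {#x \<otimes> b, a \<otimes> y, y \<otimes> x, b \<otimes> a#} z mod 3"
    and conditions:
      "(b \<otimes> a = x \<otimes> y \<and> y \<otimes> x = a \<otimes> y \<and> a \<otimes> y = x \<otimes> b)
     \<or> (x \<otimes> y = y \<otimes> a \<and> y \<otimes> a = a \<otimes> b \<and> b \<otimes> x = a \<otimes> y)
     \<or> (x \<otimes> y = b \<otimes> x \<and> b \<otimes> x = a \<otimes> b \<and> y \<otimes> a = x \<otimes> b)
     \<or> (a \<otimes> b = y \<otimes> x \<and> x \<otimes> y = b \<otimes> x \<and> b \<otimes> x = y \<otimes> a)"
  shows "cube_linked x y a b"
  using conditions
proof (elim disjE conjE)
  assume C3: "b \<otimes> a = x \<otimes> y" "y \<otimes> x = a \<otimes> y" "a \<otimes> y = x \<otimes> b"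
  have "a \<otimes> b = y \<otimes> a \<and> y \<otimes> a = b \<otimes> x"
    using counts[of "a \<otimes> b"] C3 carrier distinct by (auto split: if_splits)
  then show ?thesis using cube_linked_C3[OF carrier] C3 by simp
next
  assume C4: "x \<otimes> y = y \<otimes> a" "y \<otimes> a = a \<otimes> b" "b \<otimes> x = a \<otimes> y"
  have "y \<otimes> x = b \<otimes> a \<and> b \<otimes> a = x \<otimes> b"
    using counts[of "y \<otimes> x"] C4 carrier distinct by (auto split: if_splits)
  then show ?thesis using cube_linked_C4[OF carrier] C4 by simp
next
  assume C5: "x \<otimes> y = b \<otimes> x" "b \<otimes> x = a \<otimes> b" "y \<otimes> a = x \<otimes> b"
  have "y \<otimes> x = b \<otimes> a \<and> b \<otimes> a = a \<otimes> y"
    using counts[of "y \<otimes> x"] C5 carrier distinct by (auto split: if_splits)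
  then show ?thesis
    using cube_linked_mirror[OF carrier cube_linked_C4[OF carrier(3,4,1,2)]] C5 by simp
next
  assume C6: "a \<otimes> b = y \<otimes> x" "x \<otimes> y = b \<otimes> x" "b \<otimes> x = y \<otimes> a"
  have "b \<otimes> a = x \<otimes> b \<and> x \<otimes> b = a \<otimes> y"
    using counts[of "b \<otimes> a"] C6 carrier distinct by (auto split: if_splits)
  then show ?thesis
    using cube_linked_swap[OF carrier(1,2) cube_linked_C3[OF carrier(2,1,4,3)]] C6 by simp
qed

theorem lemma3p7:
  fixes G :: "('a, 'b) monoid_scheme" and \<phi> :: "'a \<Rightarrow> 'a" and g h :: 'a
  assumes "group G"
    and "CHAR('r::comm_ring_1) = 3"
    and "is_involution G \<phi>"
    and "\<forall>\<alpha>\<in>(skew_elems G \<phi> :: ('a \<Rightarrow> 'r) set). \<forall>\<beta>\<in>skew_elems G \<phi>.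
           gr_mult G \<alpha> \<beta> = gr_mult G \<beta> \<alpha>"
    and "g \<in> carrier G" "h \<in> carrier G" "\<phi> g \<noteq> g" "\<phi> h \<noteq> h"
    and "g \<otimes>\<^bsub>G\<^esub> h \<noteq> h \<otimes>\<^bsub>G\<^esub> g"
    and "(\<phi> (g \<otimes>\<^bsub>G\<^esub> h) = g \<otimes>\<^bsub>G\<^esub> h \<and>
            h \<otimes>\<^bsub>G\<^esub> g = \<phi> g \<otimes>\<^bsub>G\<^esub> h \<and> \<phi> g \<otimes>\<^bsub>G\<^esub> h = g \<otimes>\<^bsub>G\<^esub> \<phi> h)
       \<or> (g \<otimes>\<^bsub>G\<^esub> h = h \<otimes>\<^bsub>G\<^esub> \<phi> g \<and> h \<otimes>\<^bsub>G\<^esub> \<phi> g = \<phi> g \<otimes>\<^bsub>G\<^esub> \<phi> h \<and>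
            \<phi> h \<otimes>\<^bsub>G\<^esub> g = \<phi> g \<otimes>\<^bsub>G\<^esub> h)
       \<or> (g \<otimes>\<^bsub>G\<^esub> h = \<phi> h \<otimes>\<^bsub>G\<^esub> g \<and> \<phi> h \<otimes>\<^bsub>G\<^esub> g = \<phi> g \<otimes>\<^bsub>G\<^esub> \<phi> h \<and>
            h \<otimes>\<^bsub>G\<^esub> \<phi> g = g \<otimes>\<^bsub>G\<^esub> \<phi> h)
       \<or> (\<phi> (h \<otimes>\<^bsub>G\<^esub> g) = h \<otimes>\<^bsub>G\<^esub> g \<and>
            g \<otimes>\<^bsub>G\<^esub> h = \<phi> h \<otimes>\<^bsub>G\<^esub> g \<and> \<phi> h \<otimes>\<^bsub>G\<^esub> g = h \<otimes>\<^bsub>G\<^esub> \<phi> g)"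
  shows "generate G {inv\<^bsub>G\<^esub> g \<otimes>\<^bsub>G\<^esub> \<phi> g} = generate G {inv\<^bsub>G\<^esub> h \<otimes>\<^bsub>G\<^esub> \<phi> h} \<and>
         generate G {inv\<^bsub>G\<^esub> h \<otimes>\<^bsub>G\<^esub> \<phi> h} = generate G {gcomm G g h} \<and>
         gcomm G g h [^]\<^bsub>G\<^esub> (3::nat) = \<one>\<^bsub>G\<^esub>"
proof -
  interpret group G by fact
  have \<phi>_carrier: "\<phi> g \<in> carrier G" "\<phi> h \<in> carrier G"
    and \<phi>_products: "\<phi> (g \<otimes>\<^bsub>G\<^esub> h) = \<phi> h \<otimes>\<^bsub>G\<^esub> \<phi> g" "\<phi> (h \<otimes>\<^bsub>G\<^esub> g) = \<phi> g \<otimes>\<^bsub>G\<^esub> \<phi> h"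
    using assms(3,5,6) unfolding is_involution_def by auto
  have "gr_mult G (point_diff g (\<phi> g)) (point_diff h (\<phi> h))
      = (gr_mult G (point_diff h (\<phi> h)) (point_diff g (\<phi> g)) :: 'a \<Rightarrow> 'r)"
    using assms(4) point_diff_skew[OF assms(3,5,7)] point_diff_skew[OF assms(3,6,8)] by blast
  from commuting_differences_counts[OF assms(5,6) \<phi>_carrier _ _ this] assms(2,7,8)
  have "cube_linked g h (\<phi> g) (\<phi> h)"
    using \<phi>_carrier assms(5-10) unfolding \<phi>_products
    by (intro cube_linked_of_conditions) (auto simp: eq_commute[of "\<phi> _"])
  then show ?thesis by (rule cube_linked_generate)
qed

end
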